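(* Let $\theta:\mathbb{A}\to\mathbb{A}^\lambda$ be a primitive substitution satisfying the standing assumptions, and let $\Theta=\theta\vee\widetilde\theta:\overline{\mathcal{X}}\to\overline{\mathcal{X}}^\lambda$. Then $\Theta$ is primitive and $h(\Theta)=h(\theta)$.
   Context: Substitution $\theta:\mathbb{A}\to\mathbb{A}^\lambda$, $\lambda\ge2$; primitive: some iterate $\theta^k(a)$ contains all letters for each $a$. Standing assumptions: $\theta(a_0)_0=a_0$, $\theta$ injective on letters, subshift infinite. Height of a primitive substitution $\zeta$: $h(\zeta)=\max\{m\ge1:\gcd(m,\lambda)=1,\ m\mid\gcd\{r\ge1:v[r]=v[0]\}\}$ where $v$ is a fixed point of a suitable power of $\zeta$ (independent of choices). Let $\mathcal{X}$ be the set of $M\subset\mathbb{A}$ with $|M|=c(\theta):=\min_{k\ge1,0\le j<\lambda^k}|\{\theta^k(a)_j:a\in\mathbb{A}\}|$ and $M=\{\theta^k(a)_j:a\in\mathbb{A}\}$ for some $k\ge1$, $0\le j<\lambda^k$; $\widetilde\theta:\mathcal{X}\to\mathcal{X}^\lambda$, $\widetilde\theta(M)_j=\{\theta(a)_j:a\in M\}$. Let $\overline{\mathcal{X}}=\{(a,M):M\in\mathcal{X},\ a\in M\}$ and $\Theta(a,M)_j=(\theta(a)_j,\widetilde\theta(M)_j)$ for $0\le j<\lambda$ (this maps $\overline{\mathcal{X}}$ into $\overline{\mathcal{X}}^\lambda$). *)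

theory Defs
  imports Main
begin

text \<open>A substitution of constant length lam on an alphabet is a function
  zeta :: 'b => nat => 'b, where zeta a j is the j-th letter of zeta(a), j < lam.
  The iterate zeta^k(a) is the word of length lam^k given by subst_iter.\<close>

primrec subst_iter :: "nat \<Rightarrow> ('b \<Rightarrow> nat \<Rightarrow> 'b) \<Rightarrow> nat \<Rightarrow> 'b \<Rightarrow> nat \<Rightarrow> 'b" where
  "subst_iter lam z 0 a j = a"
| "subst_iter lam z (Suc k) a j = z (subst_iter lam z k a (j div lam)) (j mod lam)"

definition primitive_on :: "'b set \<Rightarrow> nat \<Rightarrow> ('b \<Rightarrow> nat \<Rightarrow> 'b) \<Rightarrow> bool" where
  "primitive_on B lam z \<longleftrightarrow>
     (\<forall>a\<in>B. \<forall>j<lam. z a j \<in> B) \<and>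
     (\<exists>k\<ge>1. \<forall>a\<in>B. \<forall>b\<in>B. \<exists>j<lam ^ k. subst_iter lam z k a j = b)"

text \<open>Height: choose p >= 1 and a letter b with z^p(b)_0 = b; v is the one-sided fixed
  point of z^p starting with b, v[r] = z^(p(r+1))(b)_r.\<close>
definition height_on :: "'b set \<Rightarrow> nat \<Rightarrow> ('b \<Rightarrow> nat \<Rightarrow> 'b) \<Rightarrow> nat" where
  "height_on B lam z =
     (let (p, b) = (SOME (p, b). p \<ge> 1 \<and> b \<in> B \<and> subst_iter lam z p b 0 = b);
          v = (\<lambda>r. subst_iter lam z (p * (r + 1)) b r)
      in GREATEST m. m \<ge> 1 \<and> coprime m lam \<and> m dvd Gcd {r. r \<ge> 1 \<and> v r = v 0})"

definition subshift :: "nat \<Rightarrow> ('a \<Rightarrow> nat \<Rightarrow> 'a) \<Rightarrow> (int \<Rightarrow> 'a) set" where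
  "subshift lam th = {x. \<forall>i::int. \<forall>n::nat. \<exists>k a s. s + n \<le> lam ^ k \<and>
        (\<forall>t<n. subst_iter lam th k a (s + t) = x (i + int t))}"

definition col_card :: "nat \<Rightarrow> ('a \<Rightarrow> nat \<Rightarrow> 'a) \<Rightarrow> nat" where
  "col_card lam th = Min {card ((\<lambda>a. subst_iter lam th k a j) ` UNIV) | k j. k \<ge> 1 \<and> j < lam ^ k}"

definition Xcal :: "nat \<Rightarrow> ('a \<Rightarrow> nat \<Rightarrow> 'a) \<Rightarrow> 'a set set" where
  "Xcal lam th = {M. card M = col_card lam th \<and>
      (\<exists>k\<ge>1. \<exists>j<lam ^ k. M = (\<lambda>a. subst_iter lam th k a j) ` UNIV)}"

definition theta_tilde :: "('a \<Rightarrow> nat \<Rightarrow> 'a) \<Rightarrow> 'a set \<Rightarrow> nat \<Rightarrow> 'a set" where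
  "theta_tilde th M j = (\<lambda>a. th a j) ` M"

definition Xbar :: "nat \<Rightarrow> ('a \<Rightarrow> nat \<Rightarrow> 'a) \<Rightarrow> ('a \<times> 'a set) set" where
  "Xbar lam th = {(a, M). M \<in> Xcal lam th \<and> a \<in> M}"

definition Theta :: "('a \<Rightarrow> nat \<Rightarrow> 'a) \<Rightarrow> ('a \<times> 'a set) \<Rightarrow> nat \<Rightarrow> ('a \<times> 'a set)" where
  "Theta th aM j = (th (fst aM) j, theta_tilde th (snd aM) j)"

end

theory Submission
  imports Defs
begin

text \<open>The iterates of \<Theta> are \<open>\<Theta>\<^sup>k(a,M)\<^sub>j = (\<theta>\<^sup>k(a)\<^sub>j, {\<theta>\<^sup>k(x)\<^sub>j | x \<in> M})\<close>. A column map
  \<open>x \<mapsto> \<theta>\<^sup>k(x)\<^sub>j\<close> sends a minimal column set onto a minimal column set, since the cardinality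
  can neither grow nor drop below \<open>c(\<theta>)\<close>; in particular the column generating a minimal set \<open>N\<close>
  sends every minimal set onto \<open>N\<close>, and all minimal sets are generated by columns of one common
  level. Primitivity of \<Theta> follows: from \<open>(a,M)\<close>, first reach a preimage of the target letter
  with \<theta>, then apply the column generating the target set.

  The height of a primitive substitution is the largest \<open>m\<close> coprime to \<open>\<lambda>\<close> such that equal
  letters in any iterated word \<open>\<zeta>\<^sup>k(c)\<close> only occur at positions congruent mod \<open>m\<close>. This property
  passes from \<theta> to \<Theta>, because the first component of a \<Theta>-letter is a \<theta>-letter, and back from
  \<Theta> to \<theta>: if \<open>\<theta>\<^sup>k(c)\<^sub>j = \<theta>\<^sup>k(c)\<^sub>j\<^sub>'\<close>, pick a minimal set \<open>M \<ni> c\<close> and append the column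
  generating \<open>\<theta>\<^sup>k\<^sub>j\<^sub>'(M)\<close>; both second components then collapse to that set, giving equal \<Theta>-letters at
  positions differing by a power of \<open>\<lambda>\<close> times \<open>j - j'\<close>.\<close>

lemma subst_iter_add:
  assumes "0 < lam"
  shows "subst_iter lam z (k1 + k2) a j =
    subst_iter lam z k1 (subst_iter lam z k2 a (j div lam ^ k1)) (j mod lam ^ k1)"
proof (induction k1 arbitrary: j)
  case 0
  then show ?case by simp
next
  case (Suc k1)
  have "j div lam div lam ^ k1 = j div lam ^ Suc k1"
    by (simp add: div_mult2_eq)
  moreover have "j mod (lam * lam ^ k1) div lam = j div lam mod lam ^ k1"
    using assms by (simp add: mod_mult2_eq)
  moreover have "j mod (lam * lam ^ k1) mod lam = j mod lam"
    by (metis mod_mod_cancel dvd_triv_left)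
  ultimately show ?case using Suc by simp
qed

lemma subst_iter_add_index:
  assumes "0 < lam" "i < lam ^ n"
  shows "subst_iter lam z (n + k) x (j * lam ^ n + i) = subst_iter lam z n (subst_iter lam z k x j) i"
proof -
  have "(j * m + i) div m = j \<and> (j * m + i) mod m = i" if "i < m" for m :: nat
    using that by simp
  with assms(2) show ?thesis using subst_iter_add[OF assms(1), of z n k x "j * lam ^ n + i"] by metis
qed

lemma mult_power_add_less:
  fixes i j l :: nat
  assumes "j < l ^ k" "i < l ^ n"
  shows "j * l ^ n + i < l ^ (n + k)"
proof -
  have "j * l ^ n + i < (j + 1) * l ^ n" using assms(2) by simp
  also have "\<dots> \<le> l ^ k * l ^ n" using assms(1) by (intro mult_right_mono) auto
  finally show ?thesis by (simp add: power_add mult.commute)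
qed

lemma subst_iter_closed:
  assumes "\<forall>a\<in>B. \<forall>j<lam. z a j \<in> B" "0 < lam" "c \<in> B"
  shows "subst_iter lam z k c j \<in> B"
  using assms by (induction k arbitrary: j) auto

lemma primitive_on_eventually:
  assumes "primitive_on B lam z" "0 < lam"
  shows "\<exists>K\<ge>1. \<forall>n\<ge>K. \<forall>a\<in>B. \<forall>c\<in>B. \<exists>t<lam ^ n. subst_iter lam z n a t = c"
proof -
  from assms(1) obtain K where "K \<ge> 1"
    and K: "\<forall>a\<in>B. \<forall>b\<in>B. \<exists>j<lam ^ K. subst_iter lam z K a j = b"
    and closed: "\<forall>a\<in>B. \<forall>j<lam. z a j \<in> B"
    unfolding primitive_on_def by blast
  have "\<exists>t<lam ^ n. subst_iter lam z n a t = c" if "n \<ge> K" "a \<in> B" "c \<in> B" for n a c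
  proof -
    have "subst_iter lam z (n - K) a 0 \<in> B"
      using subst_iter_closed[OF closed assms(2) \<open>a \<in> B\<close>] .
    then obtain t where t: "t < lam ^ K" "subst_iter lam z K (subst_iter lam z (n - K) a 0) t = c"
      using K \<open>c \<in> B\<close> by blast
    have "subst_iter lam z (K + (n - K)) a (0 * lam ^ K + t) = c"
      unfolding subst_iter_add_index[OF assms(2) t(1)] by (rule t(2))
    moreover have "lam ^ K \<le> lam ^ n" using assms(2) that(1) by (intro power_increasing) auto
    ultimately show ?thesis using t(1) that(1) by (intro exI[of _ t]) auto
  qed
  then show ?thesis using \<open>K \<ge> 1\<close> by blast
qed

lemma exists_fixed_first_letter:
  assumes "0 < lam" "finite B" "x0 \<in> B" and closed: "\<forall>a\<in>B. \<forall>j<lam. z a j \<in> B"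
  shows "\<exists>p b. p \<ge> 1 \<and> b \<in> B \<and> subst_iter lam z p b 0 = b"
proof -
  define g where "g n = subst_iter lam z n x0 0" for n
  have gB: "g n \<in> B" for n unfolding g_def by (rule subst_iter_closed[OF closed assms(1,3)])
  have "\<not> inj g"
  proof
    assume "inj g"
    moreover have "finite (range g)" using gB assms(2) by (meson finite_subset image_subset_iff)
    ultimately show False using finite_imageD by fastforce
  qed
  then obtain i j where "i \<noteq> j" "g i = g j" unfolding inj_def by blast
  then obtain i j where ij: "i < j" "g i = g j" by (metis linorder_neqE_nat)
  have "subst_iter lam z ((j - i) + i) x0 (0 * lam ^ (j - i) + 0) = subst_iter lam z (j - i) (g i) 0"
    unfolding g_def using assms(1) by (intro subst_iter_add_index) auto
  then have "subst_iter lam z (j - i) (g i) 0 = g i" using ij unfolding g_def by simp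
  then show ?thesis using gB[of i] ij(1) by (intro exI[of _ "j - i"] exI[of _ "g i"]) auto
qed

lemma subst_iter_mult_fixed_0:
  assumes "0 < lam" "subst_iter lam z p b 0 = b"
  shows "subst_iter lam z (p * n) b 0 = b"
proof (induction n)
  case (Suc n)
  have "subst_iter lam z (p + p * n) b 0 = b"
    unfolding subst_iter_add[OF assms(1)] using Suc assms by simp
  then show ?case by simp
qed simp

lemma subst_iter_mult_prefix:
  assumes "0 < lam" "subst_iter lam z p b 0 = b" "n1 \<le> n2" "y < lam ^ (p * n1)"
  shows "subst_iter lam z (p * n2) b y = subst_iter lam z (p * n1) b y"
proof -
  have "p * n2 = p * n1 + p * (n2 - n1)" using assms(3) by (simp add: diff_mult_distrib2)
  then have "subst_iter lam z (p * n2) b (0 * lam ^ (p * n1) + y) =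
      subst_iter lam z (p * n1) (subst_iter lam z (p * (n2 - n1)) b 0) y"
    using subst_iter_add_index[OF assms(1,4)] by metis
  then show ?thesis using subst_iter_mult_fixed_0[OF assms(1,2)] by simp
qed

lemma less_power_mult_Suc:
  assumes "2 \<le> lam" "1 \<le> p"
  shows "r < lam ^ (p * (r + 1))"
proof -
  have "r * 1 \<le> (r + 1) * p" using assms(2) by (intro mult_le_mono) auto
  then have "lam ^ r \<le> lam ^ (p * (r + 1))"
    using assms(1) by (intro power_increasing) (auto simp: mult.commute)
  moreover have "(2::nat) ^ r \<le> lam ^ r" using assms(1) by (simp add: power_mono)
  ultimately show ?thesis using less_exp[of r] by linarith
qed

lemma subst_iter_mult_fixed_point:
  assumes "2 \<le> lam" "1 \<le> p" "subst_iter lam z p b 0 = b" "y < lam ^ (p * N)"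
  shows "subst_iter lam z (p * N) b y = subst_iter lam z (p * (y + 1)) b y"
proof -
  have lam: "0 < lam" using assms(1) by simp
  have "y < lam ^ (p * min N (y + 1))"
    using assms(4) less_power_mult_Suc[OF assms(1,2)] by (simp add: min_def)
  then show ?thesis
    using subst_iter_mult_prefix[OF lam assms(3)] by (metis min.cobounded1 min.cobounded2)
qed

definition letter_positions_cong :: "'b set \<Rightarrow> nat \<Rightarrow> ('b \<Rightarrow> nat \<Rightarrow> 'b) \<Rightarrow> nat \<Rightarrow> bool" where
  "letter_positions_cong B lam z m \<longleftrightarrow> (\<forall>k. \<forall>c\<in>B. \<forall>j<lam ^ k. \<forall>j'<lam ^ k.
     subst_iter lam z k c j = subst_iter lam z k c j' \<longrightarrow> int m dvd int j - int j')"

lemma letter_positions_congD: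
  assumes "letter_positions_cong B lam z m" "c \<in> B" "j < lam ^ k" "j' < lam ^ k"
    and "subst_iter lam z k c j = subst_iter lam z k c j'"
  shows "int m dvd int j - int j'"
  using assms unfolding letter_positions_cong_def by blast

lemma dvd_of_return_to_fixed_letter:
  assumes "2 \<le> lam" "1 \<le> p" "subst_iter lam z p b 0 = b"
    and returns: "\<And>r. r \<ge> 1 \<Longrightarrow> subst_iter lam z (p * (r + 1)) b r = b \<Longrightarrow> m dvd r"
    and "y < lam ^ (p * N)" "subst_iter lam z (p * N) b y = b"
  shows "m dvd y"
proof (cases "y = 0")
  case False
  moreover have "subst_iter lam z (p * (y + 1)) b y = b"
    using subst_iter_mult_fixed_point[OF assms(1-3,5)] assms(6) by simp
  ultimately show ?thesis using returns by simp
qed simp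

text \<open>The common letter \<open>d\<close> of \<open>\<zeta>\<^sup>k(c)\<close> at \<open>j\<close> and \<open>j'\<close> is lifted into the fixed point:
  choose \<open>e\<close> with \<open>p | k + e\<close> and \<open>c\<close> occurring in \<open>\<zeta>\<^sup>e(b)\<close>, and \<open>b\<close> occurring in
  \<open>\<zeta>\<^sup>p\<^sup>K(d)\<close>. Then \<open>b\<close> returns at two positions of the fixed point that differ by
  \<open>(j - j') \<lambda>\<^sup>p\<^sup>K\<close>, and \<open>\<lambda>\<^sup>p\<^sup>K\<close> is invertible mod \<open>m\<close>.\<close>

lemma letter_positions_cong_if_returns_dvd:
  assumes lam: "2 \<le> lam" and prim: "primitive_on B lam z"
    and fixed: "1 \<le> p" "b \<in> B" "subst_iter lam z p b 0 = b"
    and returns: "\<And>r. r \<ge> 1 \<Longrightarrow> subst_iter lam z (p * (r + 1)) b r = b \<Longrightarrow> m dvd r"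
    and "coprime m lam"
  shows "letter_positions_cong B lam z m"
  unfolding letter_positions_cong_def
proof (intro allI ballI impI)
  fix k c j j'
  assume c: "c \<in> B" and j: "j < lam ^ k" and j': "j' < lam ^ k"
    and eq: "subst_iter lam z k c j = subst_iter lam z k c j'"
  have lam0: "0 < lam" using lam by simp
  have closed: "\<forall>a\<in>B. \<forall>j<lam. z a j \<in> B" using prim unfolding primitive_on_def by blast
  obtain K where "K \<ge> 1" and
    K: "\<And>n a c. n \<ge> K \<Longrightarrow> a \<in> B \<Longrightarrow> c \<in> B \<Longrightarrow> \<exists>t<lam ^ n. subst_iter lam z n a t = c"
    using primitive_on_eventually[OF prim lam0] by blast
  define d where "d = subst_iter lam z k c j"
  define e where "e = p * (k + K) - k"
  have "k + K \<le> p * (k + K)" using fixed(1) by simp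
  then have ke: "k + e = p * (k + K)" and "e \<ge> K" unfolding e_def by arith+
  obtain x where x: "x < lam ^ e" "subst_iter lam z e b x = c"
    using K[OF \<open>e \<ge> K\<close> fixed(2) c] by blast
  obtain t where t: "t < lam ^ (p * K)" "subst_iter lam z (p * K) d t = b"
    using K[of "p * K" d b] fixed subst_iter_closed[OF closed lam0 c] unfolding d_def by auto
  have "m dvd (x * lam ^ k + i) * lam ^ (p * K) + t"
    if i: "i < lam ^ k" "subst_iter lam z k c i = d" for i
  proof (rule dvd_of_return_to_fixed_letter[OF lam fixed(1,3) returns])
    have exponent: "p * (k + K + K) = p * K + (k + e)" using ke by (simp add: algebra_simps)
    show "(x * lam ^ k + i) * lam ^ (p * K) + t < lam ^ (p * (k + K + K))"
      unfolding exponent using mult_power_add_less[OF mult_power_add_less[OF x(1) i(1)] t(1)]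
      by (simp add: add.commute)
    show "subst_iter lam z (p * (k + K + K)) b ((x * lam ^ k + i) * lam ^ (p * K) + t) = b"
      unfolding exponent subst_iter_add_index[OF lam0 t(1)] subst_iter_add_index[OF lam0 i(1)]
      using x(2) i(2) t(2) by simp
  qed
  from this[OF j] this[OF j'] have "int m dvd
      int ((x * lam ^ k + j) * lam ^ (p * K) + t) - int ((x * lam ^ k + j') * lam ^ (p * K) + t)"
    using eq unfolding d_def by (simp del: of_nat_add of_nat_mult)
  then have "int m dvd (int j - int j') * int lam ^ (p * K)"
    by (simp add: algebra_simps)
  then show "int m dvd int j - int j'"
    using \<open>coprime m lam\<close> by (simp add: coprime_dvd_mult_left_iff)
qed

lemma returns_dvd_if_letter_positions_cong:
  assumes "2 \<le> lam" "letter_positions_cong B lam z m"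
    and "1 \<le> p" "b \<in> B" "subst_iter lam z p b 0 = b"
    and "subst_iter lam z (p * (r + 1)) b r = b"
  shows "m dvd r"
proof -
  have "0 < lam ^ (p * (r + 1))" using assms(1) by simp
  moreover have "r < lam ^ (p * (r + 1))" using less_power_mult_Suc[OF assms(1,3)] .
  moreover have "subst_iter lam z (p * (r + 1)) b 0 = subst_iter lam z (p * (r + 1)) b r"
    using subst_iter_mult_fixed_0[OF _ assms(5), of "r + 1"] assms(1,6) by simp
  ultimately have "int m dvd int 0 - int r"
    by (intro letter_positions_congD[OF assms(2,4)])
  then show ?thesis by simp
qed

lemma height_on_eq_Greatest_letter_positions_cong:
  assumes lam: "2 \<le> lam" and prim: "primitive_on B lam z"
    and "\<exists>p b. p \<ge> 1 \<and> b \<in> B \<and> subst_iter lam z p b 0 = b"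
  shows "height_on B lam z = (GREATEST m. m \<ge> 1 \<and> coprime m lam \<and> letter_positions_cong B lam z m)"
proof -
  define Q where "Q = (\<lambda>(p::nat, b). p \<ge> 1 \<and> b \<in> B \<and> subst_iter lam z p b 0 = b)"
  obtain p b where pb: "(SOME x. Q x) = (p, b)" by (cases "SOME x. Q x") auto
  have "\<exists>x. Q x" using assms(3) unfolding Q_def by blast
  then have "Q (SOME x. Q x)" by (rule someI_ex)
  then have fixed: "1 \<le> p" "b \<in> B" "subst_iter lam z p b 0 = b" using pb unfolding Q_def by auto
  define S where "S = {r. r \<ge> 1 \<and> subst_iter lam z (p * (r + 1)) b r = subst_iter lam z (p * (0 + 1)) b 0}"
  have "(SOME (p, b). p \<ge> 1 \<and> b \<in> B \<and> subst_iter lam z p b 0 = b) = (p, b)"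
    using pb unfolding Q_def .
  then have height: "height_on B lam z = (GREATEST m. m \<ge> 1 \<and> coprime m lam \<and> m dvd Gcd S)"
    unfolding height_on_def S_def by simp
  have S: "r \<in> S \<longleftrightarrow> r \<ge> 1 \<and> subst_iter lam z (p * (r + 1)) b r = b" for r
    unfolding S_def using fixed by simp
  have "m dvd Gcd S \<longleftrightarrow> letter_positions_cong B lam z m" if "coprime m lam" for m
  proof
    assume "m dvd Gcd S"
    then have "m dvd r" if "r \<in> S" for r using Gcd_dvd[OF that] dvd_trans by blast
    then show "letter_positions_cong B lam z m"
      using letter_positions_cong_if_returns_dvd[OF lam prim fixed _ \<open>coprime m lam\<close>] S by blast
  next
    assume "letter_positions_cong B lam z m"
    then show "m dvd Gcd S"
      using returns_dvd_if_letter_positions_cong[OF lam _ fixed] S by (intro Gcd_greatest) blast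
  qed
  then have "(\<lambda>m. m \<ge> 1 \<and> coprime m lam \<and> m dvd Gcd S) =
      (\<lambda>m. m \<ge> 1 \<and> coprime m lam \<and> letter_positions_cong B lam z m)" by blast
  then show ?thesis unfolding height by simp
qed

lemma subst_iter_Theta:
  "subst_iter lam (Theta th) k (a, M) j = (subst_iter lam th k a j, (\<lambda>x. subst_iter lam th k x j) ` M)"
  by (induction k arbitrary: j) (simp_all add: Theta_def theta_tilde_def image_image)

lemma finite_column_cards:
  fixes th :: "'a::finite \<Rightarrow> nat \<Rightarrow> 'a"
  shows "finite {card (range (\<lambda>a. subst_iter lam th k a j)) | k j. k \<ge> 1 \<and> j < lam ^ k}"
proof (rule finite_subset)
  have "card (range f) \<le> card (UNIV :: 'a set)" for f :: "'a \<Rightarrow> 'a" by (rule card_mono) auto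
  then show "{card (range (\<lambda>a. subst_iter lam th k a j)) | k j. k \<ge> 1 \<and> j < lam ^ k}
      \<subseteq> {..card (UNIV :: 'a set)}" by blast
qed simp

lemma col_card_le:
  fixes th :: "'a::finite \<Rightarrow> nat \<Rightarrow> 'a"
  assumes "1 \<le> k" "j < lam ^ k"
  shows "col_card lam th \<le> card (range (\<lambda>a. subst_iter lam th k a j))"
  unfolding col_card_def by (rule Min_le[OF finite_column_cards]) (use assms in blast)

lemma Xcal_nonempty:
  fixes th :: "'a::finite \<Rightarrow> nat \<Rightarrow> 'a"
  assumes "0 < lam"
  shows "Xcal lam th \<noteq> {}"
proof -
  let ?S = "{card (range (\<lambda>a. subst_iter lam th k a j)) | k j. k \<ge> 1 \<and> j < lam ^ k}"
  have "card (range (\<lambda>a. subst_iter lam th 1 a 0)) \<in> ?S" using assms by force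
  then have "col_card lam th \<in> ?S"
    unfolding col_card_def using Min_in[OF finite_column_cards] by blast
  then obtain k j where "k \<ge> 1" "j < lam ^ k" "col_card lam th = card (range (\<lambda>a. subst_iter lam th k a j))"
    by blast
  then have "range (\<lambda>a. subst_iter lam th k a j) \<in> Xcal lam th" unfolding Xcal_def by auto
  then show ?thesis by blast
qed

lemma Xcal_image_column:
  fixes th :: "'a::finite \<Rightarrow> nat \<Rightarrow> 'a"
  assumes lam: "0 < lam" and M: "M \<in> Xcal lam th" and j: "j < lam ^ k"
  shows "(\<lambda>a. subst_iter lam th k a j) ` M \<in> Xcal lam th"
proof -
  from M obtain n i where n: "n \<ge> 1" "i < lam ^ n" "M = range (\<lambda>b. subst_iter lam th n b i)"
    and card_M: "card M = col_card lam th" unfolding Xcal_def by blast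
  have image: "(\<lambda>a. subst_iter lam th k a j) ` M = range (\<lambda>b. subst_iter lam th (k + n) b (i * lam ^ k + j))"
    unfolding n(3) image_image subst_iter_add_index[OF lam j] ..
  have index: "i * lam ^ k + j < lam ^ (k + n)" using mult_power_add_less[OF n(2) j] .
  have "card ((\<lambda>a. subst_iter lam th k a j) ` M) \<le> col_card lam th"
    using card_image_le[of M] card_M by simp
  moreover have "col_card lam th \<le> card ((\<lambda>a. subst_iter lam th k a j) ` M)"
    unfolding image using n(1) index by (intro col_card_le) auto
  ultimately have "card ((\<lambda>a. subst_iter lam th k a j) ` M) = col_card lam th" by simp
  moreover have "k + n \<ge> 1" using n(1) by simp
  ultimately show ?thesis unfolding Xcal_def image using index by blast
qed

lemma Xcal_image_generating_column:
  fixes th :: "'a::finite \<Rightarrow> nat \<Rightarrow> 'a"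
  assumes lam: "0 < lam" and N: "N \<in> Xcal lam th" "N = range (\<lambda>b. subst_iter lam th n b i)"
    and i: "i < lam ^ n" and M: "M \<in> Xcal lam th"
  shows "(\<lambda>a. subst_iter lam th n a i) ` M = N"
proof (rule card_subset_eq)
  show "(\<lambda>a. subst_iter lam th n a i) ` M \<subseteq> N" unfolding N(2) by blast
  show "card ((\<lambda>a. subst_iter lam th n a i) ` M) = card N"
    using Xcal_image_column[OF lam M i] N(1) by (simp add: Xcal_def)
qed simp

lemma Xcal_covers:
  fixes th :: "'a::finite \<Rightarrow> nat \<Rightarrow> 'a"
  assumes lam: "0 < lam" and prim: "primitive_on UNIV lam th"
  shows "\<exists>M\<in>Xcal lam th. c \<in> M"
proof -
  obtain M0 where M0: "M0 \<in> Xcal lam th" using Xcal_nonempty[OF lam] by blast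
  then obtain n i where "M0 = range (\<lambda>b. subst_iter lam th n b i)" unfolding Xcal_def by blast
  then obtain y where y: "y \<in> M0" by blast
  obtain K where "\<forall>a b. \<exists>j<lam ^ K. subst_iter lam th K a j = b"
    using prim unfolding primitive_on_def by blast
  then obtain q where q: "q < lam ^ K" "subst_iter lam th K y q = c" by blast
  have "(\<lambda>a. subst_iter lam th K a q) ` M0 \<in> Xcal lam th" by (rule Xcal_image_column[OF lam M0 q(1)])
  moreover have "c \<in> (\<lambda>a. subst_iter lam th K a q) ` M0" unfolding q(2)[symmetric] using y by (rule imageI)
  ultimately show ?thesis ..
qed

lemma Xcal_generated_at_higher_level:
  fixes th :: "'a::finite \<Rightarrow> nat \<Rightarrow> 'a"
  assumes lam: "0 < lam" and N: "N \<in> Xcal lam th" "N = range (\<lambda>b. subst_iter lam th n b i)"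
    and n: "1 \<le> n" "i < lam ^ n" "n \<le> L"
  shows "N = range (\<lambda>b. subst_iter lam th L b i)"
proof (rule card_subset_eq[symmetric])
  have "subst_iter lam th L b i = subst_iter lam th n (subst_iter lam th (L - n) b 0) i" for b
    using subst_iter_add_index[OF lam n(2), of th "L - n" b 0] n(3) by simp
  then show sub: "range (\<lambda>b. subst_iter lam th L b i) \<subseteq> N" unfolding N(2) by auto
  have "i < lam ^ L" using n(2) power_increasing[OF n(3), of lam] lam by simp
  then have "col_card lam th \<le> card (range (\<lambda>b. subst_iter lam th L b i))"
    using n by (intro col_card_le) auto
  moreover have "card (range (\<lambda>b. subst_iter lam th L b i)) \<le> card N"
    using sub by (intro card_mono) auto
  ultimately show "card (range (\<lambda>b. subst_iter lam th L b i)) = card N"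
    using N(1) by (simp add: Xcal_def)
qed simp

lemma Xcal_common_level:
  fixes th :: "'a::finite \<Rightarrow> nat \<Rightarrow> 'a"
  assumes lam: "0 < lam"
  obtains L where "L \<ge> 1" "\<And>N. N \<in> Xcal lam th \<Longrightarrow> \<exists>i<lam ^ L. N = range (\<lambda>b. subst_iter lam th L b i)"
proof -
  have "\<forall>N\<in>Xcal lam th. \<exists>n. n \<ge> 1 \<and> (\<exists>i<lam ^ n. N = range (\<lambda>b. subst_iter lam th n b i))"
    unfolding Xcal_def by blast
  then obtain lv where lv: "\<And>N. N \<in> Xcal lam th \<Longrightarrow>
      lv N \<ge> 1 \<and> (\<exists>i<lam ^ lv N. N = range (\<lambda>b. subst_iter lam th (lv N) b i))"
    by metis
  define L where "L = Max (lv ` Xcal lam th)"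
  have le: "lv N \<le> L" if "N \<in> Xcal lam th" for N
    unfolding L_def using that by (intro Max_ge) auto
  show ?thesis
  proof
    obtain M where "M \<in> Xcal lam th" using Xcal_nonempty[OF lam] by blast
    then show "L \<ge> 1" using lv le by (meson order_trans)
  next
    fix N assume N: "N \<in> Xcal lam th"
    then obtain i where i: "i < lam ^ lv N" "N = range (\<lambda>b. subst_iter lam th (lv N) b i)"
      using lv by blast
    have "i < lam ^ L" using i(1) power_increasing[OF le[OF N], of lam] lam by simp
    moreover have "N = range (\<lambda>b. subst_iter lam th L b i)"
      using Xcal_generated_at_higher_level[OF lam N i(2)] lv[OF N] i(1) le[OF N] by blast
    ultimately show "\<exists>i<lam ^ L. N = range (\<lambda>b. subst_iter lam th L b i)" by blast
  qed
qed

lemma Theta_closed: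
  fixes th :: "'a::finite \<Rightarrow> nat \<Rightarrow> 'a"
  assumes "0 < lam"
  shows "\<forall>x\<in>Xbar lam th. \<forall>j<lam. Theta th x j \<in> Xbar lam th"
proof (intro ballI allI impI)
  fix x j assume x: "x \<in> Xbar lam th" and j: "j < lam"
  obtain a M where aM: "x = (a, M)" "M \<in> Xcal lam th" "a \<in> M"
    using x unfolding Xbar_def by blast
  have "(\<lambda>b. th b j) = (\<lambda>b. subst_iter lam th 1 b j)" using j by simp
  then have "(\<lambda>b. th b j) ` M \<in> Xcal lam th"
    using Xcal_image_column[OF assms aM(2), of j 1] j by simp
  then show "Theta th x j \<in> Xbar lam th"
    using aM j unfolding Theta_def theta_tilde_def Xbar_def by simp
qed

lemma primitive_Theta:
  fixes th :: "'a::finite \<Rightarrow> nat \<Rightarrow> 'a"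
  assumes lam: "0 < lam" and prim: "primitive_on UNIV lam th"
  shows "primitive_on (Xbar lam th) lam (Theta th)"
proof -
  obtain K where K: "\<And>a b. \<exists>j<lam ^ K. subst_iter lam th K a j = b"
    using prim unfolding primitive_on_def by blast
  obtain L where "L \<ge> 1"
    and L: "\<And>N. N \<in> Xcal lam th \<Longrightarrow> \<exists>i<lam ^ L. N = range (\<lambda>b. subst_iter lam th L b i)"
    using Xcal_common_level[OF lam] by blast
  have "\<exists>j<lam ^ (L + K). subst_iter lam (Theta th) (L + K) u j = v"
    if uv: "u \<in> Xbar lam th" "v \<in> Xbar lam th" for u v
  proof -
    obtain a M b N where pairs: "u = (a, M)" "v = (b, N)"
      and M: "M \<in> Xcal lam th" and N: "N \<in> Xcal lam th" "b \<in> N"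
      using uv unfolding Xbar_def by blast
    obtain i where i: "i < lam ^ L" "N = range (\<lambda>b. subst_iter lam th L b i)" using L[OF N(1)] by blast
    obtain x where x: "b = subst_iter lam th L x i" using N(2) i(2) by blast
    obtain t where t: "t < lam ^ K" "subst_iter lam th K a t = x" using K by blast
    have "(\<lambda>c. subst_iter lam th L c i) ` (\<lambda>c. subst_iter lam th K c t) ` M = N"
      using Xcal_image_generating_column[OF lam N(1) i(2,1) Xcal_image_column[OF lam M t(1)]] .
    then have "subst_iter lam (Theta th) (L + K) u (t * lam ^ L + i) = v"
      unfolding pairs subst_iter_Theta subst_iter_add_index[OF lam i(1)] using t(2) x
      by (simp add: image_image)
    then show ?thesis using mult_power_add_less[OF t(1) i(1)] by blast
  qed
  then have "\<forall>u\<in>Xbar lam th. \<forall>v\<in>Xbar lam th. \<exists>j<lam ^ (L + K). subst_iter lam (Theta th) (L + K) u j = v"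
    by blast
  moreover have "L + K \<ge> 1" using \<open>L \<ge> 1\<close> by simp
  ultimately show ?thesis
    unfolding primitive_on_def using Theta_closed[OF lam, of th] by blast
qed

lemma letter_positions_cong_Theta:
  fixes th :: "'a::finite \<Rightarrow> nat \<Rightarrow> 'a"
  assumes "letter_positions_cong UNIV lam th m"
  shows "letter_positions_cong (Xbar lam th) lam (Theta th) m"
  unfolding letter_positions_cong_def
proof (intro allI ballI impI)
  fix k u j j' assume "j < lam ^ k" "j' < lam ^ k"
    and eq: "subst_iter lam (Theta th) k u j = subst_iter lam (Theta th) k u j'"
  obtain a M where u: "u = (a, M)" by fastforce
  have "subst_iter lam th k a j = subst_iter lam th k a j'" using eq unfolding u subst_iter_Theta by simp
  then show "int m dvd int j - int j'"
    using letter_positions_congD[OF assms UNIV_I \<open>j < lam ^ k\<close> \<open>j' < lam ^ k\<close>] by blast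
qed

lemma letter_positions_cong_of_Theta:
  fixes th :: "'a::finite \<Rightarrow> nat \<Rightarrow> 'a"
  assumes lam: "0 < lam" and prim: "primitive_on UNIV lam th" and "coprime m lam"
    and Theta_cong: "letter_positions_cong (Xbar lam th) lam (Theta th) m"
  shows "letter_positions_cong UNIV lam th m"
  unfolding letter_positions_cong_def
proof (intro allI ballI impI)
  fix k c j j' assume j: "j < lam ^ k" and j': "j' < lam ^ k"
    and eq: "subst_iter lam th k c j = subst_iter lam th k c j'"
  obtain M where M: "M \<in> Xcal lam th" "c \<in> M" using Xcal_covers[OF lam prim] by blast
  define N where "N = (\<lambda>x. subst_iter lam th k x j') ` M"
  have N: "N \<in> Xcal lam th" unfolding N_def by (rule Xcal_image_column[OF lam M(1) j'])
  then obtain n i where i: "i < lam ^ n" "N = range (\<lambda>b. subst_iter lam th n b i)"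
    unfolding Xcal_def by blast
  have Theta_letter: "subst_iter lam (Theta th) (n + k) (c, M) (l * lam ^ n + i) =
      (subst_iter lam th n (subst_iter lam th k c j) i, N)"
    if "l < lam ^ k" "subst_iter lam th k c l = subst_iter lam th k c j" for l
    unfolding subst_iter_Theta subst_iter_add_index[OF lam i(1)] that(2)
    using Xcal_image_generating_column[OF lam N i(2,1) Xcal_image_column[OF lam M(1) that(1)]]
    by (simp add: image_image)
  have "(c, M) \<in> Xbar lam th" using M by (simp add: Xbar_def)
  moreover have "subst_iter lam (Theta th) (n + k) (c, M) (j * lam ^ n + i) =
      subst_iter lam (Theta th) (n + k) (c, M) (j' * lam ^ n + i)"
    by (simp only: Theta_letter[OF j refl] Theta_letter[OF j' eq[symmetric]])
  ultimately have "int m dvd int (j * lam ^ n + i) - int (j' * lam ^ n + i)"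
    using mult_power_add_less[OF j i(1)] mult_power_add_less[OF j' i(1)]
    by (intro letter_positions_congD[OF Theta_cong])
  then have "int m dvd (int j - int j') * int lam ^ n" by (simp add: algebra_simps)
  then show "int m dvd int j - int j'" using \<open>coprime m lam\<close> by (simp add: coprime_dvd_mult_left_iff)
qed

theorem mainTheorem13:
  fixes th :: "'a::finite \<Rightarrow> nat \<Rightarrow> 'a" and lam :: nat and a0 :: 'a
  assumes "lam \<ge> 2"
    and "primitive_on UNIV lam th"
    and "th a0 0 = a0"
    and "\<And>a b. (\<forall>j<lam. th a j = th b j) \<Longrightarrow> a = b"
    and "infinite (subshift lam th)"
  shows "primitive_on (Xbar lam th) lam (Theta th) \<and>
         height_on (Xbar lam th) lam (Theta th) = height_on UNIV lam th"
proof
  have lam: "0 < lam" using assms(1) by simp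
  show prim_Theta: "primitive_on (Xbar lam th) lam (Theta th)"
    by (rule primitive_Theta[OF lam assms(2)])
  obtain M where "M \<in> Xcal lam th" "a0 \<in> M" using Xcal_covers[OF lam assms(2)] by blast
  then have "(a0, M) \<in> Xbar lam th" by (simp add: Xbar_def)
  then have fixed_Theta: "\<exists>p b. p \<ge> 1 \<and> b \<in> Xbar lam th \<and> subst_iter lam (Theta th) p b 0 = b"
    using exists_fixed_first_letter[OF lam _ _ Theta_closed[OF lam]] by simp
  have fixed_th: "\<exists>p b. p \<ge> 1 \<and> b \<in> (UNIV :: 'a set) \<and> subst_iter lam th p b 0 = b"
    using assms(3) lam by (intro exI[of _ 1] exI[of _ a0]) simp
  have "letter_positions_cong (Xbar lam th) lam (Theta th) m \<longleftrightarrow> letter_positions_cong UNIV lam th m"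
    if "coprime m lam" for m
    using letter_positions_cong_Theta letter_positions_cong_of_Theta[OF lam assms(2) that] by blast
  then show "height_on (Xbar lam th) lam (Theta th) = height_on UNIV lam th"
    unfolding height_on_eq_Greatest_letter_positions_cong[OF assms(1) prim_Theta fixed_Theta]
      height_on_eq_Greatest_letter_positions_cong[OF assms(1) assms(2) fixed_th]
    by metis
qed

end
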